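(* Fix a realization of the field $\{h_v\}$, $\beta>0$, $N=2^n$ with $n\ge10$, $\Delta>0$, $\Delta'\ge0$, a set $S\subset\Lambda_N$ with $\Lambda_{N/8}\subset S$, $\Gamma=\partial S$, and $\tau^+,\tau^-\in\{-1,1\}^\Gamma$ with $\tau^+\ge\tau^-$. Then for any nonempty increasing set $\Omega^+\subset\{-1,1\}^S$ and any nonempty decreasing set $\Omega^-\subset\{-1,1\}^S$, $$\Delta\int_0^1\big(m^{S,\tau^+,t}_{\Omega^+}-m^{S,\tau^-,t}_{\Omega^-}\big)\,dt\leq8\sum_{v\in\Gamma}(\tau^+_v-\tau^-_v)-\frac1\beta\Big(\log\mu^{S,\tau^+,0}(\Omega^+)+\log\mu^{S,\tau^-,1}(\Omega^-)\Big).$$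
   Context: Write $u\sim v$ if $|u-v|_1=1$; $\partial A=\{v\in\mathbb Z^2\setminus A:u\sim v\text{ for some }u\in A\}$; $\Lambda_r=\{v\in\mathbb Z^2:|v|_\infty\le r\}$. For $0\le t\le1$ define the field $h^{(t)}_v=h_v+\Delta'$ for $v\in\Lambda_N\setminus\Lambda_{N/8}$ and $h^{(t)}_v=h_v+t\Delta$ for $v\in\Lambda_{N/8}$. For $\tau\in\{-1,1\}^\Gamma$ and $\sigma\in\{-1,1\}^S$, $H^{S,\tau,t}(\sigma)=-\big(\sum_{u\sim v,\,u,v\in S}\sigma_u\sigma_v+\sum_{u\sim v,\,u\in S,v\in\Gamma}\sigma_u\tau_v+\sum_{u\in S}\sigma_uh^{(t)}_u\big)$ and $\mu^{S,\tau,t}(\sigma)\propto e^{-\beta H^{S,\tau,t}(\sigma)}$. For $\Omega\subset\{-1,1\}^S$ with $\mu^{S,\tau,t}(\Omega)>0$, $\mu^{S,\tau,t}_\Omega=\mu^{S,\tau,t}(\cdot\mid\Omega)$ and $m^{S,\tau,t}_\Omega=\sum_{v\in\Lambda_{N/32}}\langle\sigma_v\rangle_{\mu^{S,\tau,t}_\Omega}$. A set $\Omega\subset\{-1,1\}^S$ is increasing if $\sigma\in\Omega$ and $\sigma'\ge\sigma$ imply $\sigma'\in\Omega$; it is decreasing if its complement is increasing. *)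

theory Defs
  imports "HOL-Analysis.Analysis"
begin

type_synonym vtx = "int \<times> int"

definition adj :: "vtx \<Rightarrow> vtx \<Rightarrow> bool" where
  "adj u v \<longleftrightarrow> \<bar>fst u - fst v\<bar> + \<bar>snd u - snd v\<bar> = 1"

definition bdry :: "vtx set \<Rightarrow> vtx set" where
  "bdry A = {v. v \<notin> A \<and> (\<exists>u\<in>A. adj u v)}"

definition Lam :: "int \<Rightarrow> vtx set" where
  "Lam r = {v. \<bar>fst v\<bar> \<le> r \<and> \<bar>snd v\<bar> \<le> r}"

definition configs :: "vtx set \<Rightarrow> (vtx \<Rightarrow> real) set" where
  "configs A = {\<sigma>. (\<forall>v\<in>A. \<sigma> v = 1 \<or> \<sigma> v = -1) \<and> (\<forall>v. v \<notin> A \<longrightarrow> \<sigma> v = 0)}"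

definition increasing_set :: "vtx set \<Rightarrow> (vtx \<Rightarrow> real) set \<Rightarrow> bool" where
  "increasing_set A \<Omega> \<longleftrightarrow> \<Omega> \<subseteq> configs A \<and>
     (\<forall>\<sigma>\<in>\<Omega>. \<forall>\<sigma>'\<in>configs A. (\<forall>v\<in>A. \<sigma> v \<le> \<sigma>' v) \<longrightarrow> \<sigma>' \<in> \<Omega>)"

definition decreasing_set :: "vtx set \<Rightarrow> (vtx \<Rightarrow> real) set \<Rightarrow> bool" where
  "decreasing_set A \<Omega> \<longleftrightarrow> \<Omega> \<subseteq> configs A \<and> increasing_set A (configs A - \<Omega>)"

definition hfield :: "(vtx \<Rightarrow> real) \<Rightarrow> real \<Rightarrow> real \<Rightarrow> int \<Rightarrow> real \<Rightarrow> vtx \<Rightarrow> real" where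
  "hfield h \<Delta> \<Delta>' N t v =
     (if v \<in> Lam (N div 8) then h v + t * \<Delta>
      else if v \<in> Lam N then h v + \<Delta>' else h v)"

text \<open>Hamiltonian; the sum over nearest-neighbour pairs inside S is over unordered
  edges, i.e. half the sum over ordered pairs.\<close>
definition Ham :: "(vtx \<Rightarrow> real) \<Rightarrow> real \<Rightarrow> real \<Rightarrow> int \<Rightarrow> vtx set \<Rightarrow> (vtx \<Rightarrow> real)
     \<Rightarrow> real \<Rightarrow> (vtx \<Rightarrow> real) \<Rightarrow> real" where
  "Ham h \<Delta> \<Delta>' N S \<tau> t \<sigma> =
     - ((1/2) * (\<Sum>(u,v)\<in>{(u,v). u \<in> S \<and> v \<in> S \<and> adj u v}. \<sigma> u * \<sigma> v)
        + (\<Sum>(u,v)\<in>{(u,v). u \<in> S \<and> v \<in> bdry S \<and> adj u v}. \<sigma> u * \<tau> v)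
        + (\<Sum>u\<in>S. \<sigma> u * hfield h \<Delta> \<Delta>' N t u))"

definition weight :: "real \<Rightarrow> (vtx \<Rightarrow> real) \<Rightarrow> real \<Rightarrow> real \<Rightarrow> int \<Rightarrow> vtx set \<Rightarrow> (vtx \<Rightarrow> real)
     \<Rightarrow> real \<Rightarrow> (vtx \<Rightarrow> real) \<Rightarrow> real" where
  "weight \<beta> h \<Delta> \<Delta>' N S \<tau> t \<sigma> = exp (- \<beta> * Ham h \<Delta> \<Delta>' N S \<tau> t \<sigma>)"

definition gibbs :: "real \<Rightarrow> (vtx \<Rightarrow> real) \<Rightarrow> real \<Rightarrow> real \<Rightarrow> int \<Rightarrow> vtx set \<Rightarrow> (vtx \<Rightarrow> real)
     \<Rightarrow> real \<Rightarrow> (vtx \<Rightarrow> real) set \<Rightarrow> real" where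
  "gibbs \<beta> h \<Delta> \<Delta>' N S \<tau> t \<Omega> =
     (\<Sum>\<sigma>\<in>\<Omega> \<inter> configs S. weight \<beta> h \<Delta> \<Delta>' N S \<tau> t \<sigma>) /
     (\<Sum>\<sigma>\<in>configs S. weight \<beta> h \<Delta> \<Delta>' N S \<tau> t \<sigma>)"

definition cond_spin :: "real \<Rightarrow> (vtx \<Rightarrow> real) \<Rightarrow> real \<Rightarrow> real \<Rightarrow> int \<Rightarrow> vtx set \<Rightarrow> (vtx \<Rightarrow> real)
     \<Rightarrow> real \<Rightarrow> (vtx \<Rightarrow> real) set \<Rightarrow> vtx \<Rightarrow> real" where
  "cond_spin \<beta> h \<Delta> \<Delta>' N S \<tau> t \<Omega> v =
     (\<Sum>\<sigma>\<in>\<Omega> \<inter> configs S. \<sigma> v * weight \<beta> h \<Delta> \<Delta>' N S \<tau> t \<sigma>) /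
     (\<Sum>\<sigma>\<in>\<Omega> \<inter> configs S. weight \<beta> h \<Delta> \<Delta>' N S \<tau> t \<sigma>)"

definition magn :: "real \<Rightarrow> (vtx \<Rightarrow> real) \<Rightarrow> real \<Rightarrow> real \<Rightarrow> int \<Rightarrow> vtx set \<Rightarrow> (vtx \<Rightarrow> real)
     \<Rightarrow> real \<Rightarrow> (vtx \<Rightarrow> real) set \<Rightarrow> real" where
  "magn \<beta> h \<Delta> \<Delta>' N S \<tau> t \<Omega> =
     (\<Sum>v\<in>Lam (N div 32). cond_spin \<beta> h \<Delta> \<Delta>' N S \<tau> t \<Omega> v)"

end

theory Submission
  imports Defs
begin

text \<open>
  The field depends on \<open>t\<close> only through \<open>t \<Delta>\<close> on \<open>\<Lambda>\<^bsub>N/8\<^esub>\<close>, so the log of the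
  partition function \<open>Z\<^sup>\<tau>\<^sub>t(\<Omega>)\<close> restricted to an event \<open>\<Omega>\<close> has \<open>t\<close>-derivative \<open>\<beta> \<Delta>\<close> times
  the magnetisation of \<open>\<Lambda>\<^bsub>N/8\<^esub>\<close> under \<open>\<mu>\<^sup>\<tau>\<^sub>t(\<cdot> | \<Omega>)\<close>; integrating over \<open>[0,1]\<close> turns the
  left-hand side into increments \<open>ln Z\<^sup>\<tau>\<^sub>1(\<Omega>) - ln Z\<^sup>\<tau>\<^sub>0(\<Omega>)\<close>, once \<open>\<Lambda>\<^bsub>N/32\<^esub>\<close> is enlarged
  to \<open>\<Lambda>\<^bsub>N/8\<^esub>\<close>. That enlargement is allowed because the Hamiltonian is submodular in the
  spins and monotone in the boundary condition, so Holley's inequality (a corollary of the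
  Ahlswede--Daykin four functions theorem) makes every single-site expectation under
  \<open>(\<tau>\<^sup>+, \<Omega>\<^sup>+)\<close> at least the one under \<open>(\<tau>\<^sup>-, \<Omega>\<^sup>-)\<close>. Finally, restricting to an event
  lowers a partition function, and replacing \<open>\<tau>\<^sup>-\<close> by \<open>\<tau>\<^sup>+\<close> changes every energy by at most
  \<open>4 \<Sum>(\<tau>\<^sup>+ - \<tau>\<^sup>-)\<close>, as a boundary site has at most four neighbours in \<open>S\<close>.
\<close>

section \<open>The four functions theorem and Holley's inequality\<close>

lemma four_functions_one_point:
  fixes a0 a1 b0 b1 c0 c1 d0 d1 :: real
  assumes "a0 \<ge> 0" "a1 \<ge> 0" "b0 \<ge> 0" "b1 \<ge> 0" "c0 \<ge> 0" "c1 \<ge> 0" "d0 \<ge> 0" "d1 \<ge> 0"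
    and h00: "a0 * b0 \<le> c0 * d0" and h01: "a0 * b1 \<le> c1 * d0"
    and h10: "a1 * b0 \<le> c1 * d0" and h11: "a1 * b1 \<le> c1 * d1"
  shows "(a0 + a1) * (b0 + b1) \<le> (c0 + c1) * (d0 + d1)"
proof -
  define M where "M = c1 * d0"
  define u where "u = a0 * b1"
  define w where "w = a1 * b0"
  have uM: "u \<le> M" "w \<le> M" using h01 h10 by (simp_all add: M_def u_def w_def)
  have "u + w \<le> M + c0 * d1"
  proof (cases "M = 0")
    case True
    then show ?thesis using uM mult_nonneg_nonneg[OF assms(5,8)] by linarith
  next
    case False
    then have "M > 0" using assms(6,7) by (simp add: M_def less_le)
    have "u * w = (a0 * b0) * (a1 * b1)" by (simp add: u_def w_def algebra_simps)
    also have "\<dots> \<le> (c0 * d0) * (c1 * d1)"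
      using assms by (intro mult_mono[OF h00 h11]) auto
    finally have uw: "u * w \<le> M * (c0 * d1)" by (simp add: M_def algebra_simps)
    \<comment> \<open>\<open>M (u + w) \<le> M\<^sup>2 + u w\<close> because \<open>u, w \<le> M\<close>\<close>
    have "0 \<le> (M - u) * (M - w)" using uM by simp
    then have "M * (u + w) \<le> M * (M + c0 * d1)" using uw by (simp add: algebra_simps)
    then show ?thesis using \<open>M > 0\<close> by simp
  qed
  then show ?thesis using h00 h11 by (simp add: M_def u_def w_def algebra_simps)
qed

lemma sum_Pow_insert:
  assumes "finite S" "x \<notin> S"
  shows "(\<Sum>X\<in>Pow (insert x S). f X) = (\<Sum>X\<in>Pow S. f X + f (insert x X))"
proof -
  have "inj_on (insert x) (Pow S)"
    using assms(2) unfolding inj_on_def by (metis PowD insert_ident subsetD)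
  moreover have "Pow S \<inter> insert x ` Pow S = {}" using assms(2) by auto
  ultimately show ?thesis
    using assms(1) by (simp add: Pow_insert sum.union_disjoint sum.reindex sum.distrib)
qed

theorem four_functions:
  fixes \<alpha> \<beta> \<gamma> \<delta> :: "'a set \<Rightarrow> real"
  assumes "finite S"
    and "\<And>X. X \<subseteq> S \<Longrightarrow> \<alpha> X \<ge> 0 \<and> \<beta> X \<ge> 0 \<and> \<gamma> X \<ge> 0 \<and> \<delta> X \<ge> 0"
    and "\<And>X Y. X \<subseteq> S \<Longrightarrow> Y \<subseteq> S \<Longrightarrow> \<alpha> X * \<beta> Y \<le> \<gamma> (X \<union> Y) * \<delta> (X \<inter> Y)"
  shows "(\<Sum>X\<in>Pow S. \<alpha> X) * (\<Sum>X\<in>Pow S. \<beta> X) \<le> (\<Sum>X\<in>Pow S. \<gamma> X) * (\<Sum>X\<in>Pow S. \<delta> X)"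
  using assms
proof (induction S arbitrary: \<alpha> \<beta> \<gamma> \<delta> rule: finite_induct)
  case empty
  then show ?case by simp
next
  case (insert x S)
  \<comment> \<open>sum out the coordinate \<open>x\<close>; the hypothesis for the lifted functions is the one-point case\<close>
  let ?lift = "\<lambda>f X. f X + f (insert x X)"
  have "(\<Sum>X\<in>Pow S. ?lift \<alpha> X) * (\<Sum>X\<in>Pow S. ?lift \<beta> X)
      \<le> (\<Sum>X\<in>Pow S. ?lift \<gamma> X) * (\<Sum>X\<in>Pow S. ?lift \<delta> X)"
  proof (rule insert.IH)
    fix X assume "X \<subseteq> S"
    then have "X \<subseteq> insert x S" "insert x X \<subseteq> insert x S" by auto
    then show "?lift \<alpha> X \<ge> 0 \<and> ?lift \<beta> X \<ge> 0 \<and> ?lift \<gamma> X \<ge> 0 \<and> ?lift \<delta> X \<ge> 0"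
      using insert.prems(1) by (meson add_nonneg_nonneg)
  next
    fix X Y assume XS: "X \<subseteq> S" and YS: "Y \<subseteq> S"
    then have "x \<notin> X" "x \<notin> Y" using insert.hyps(2) by auto
    then have Un: "insert x X \<union> Y = insert x (X \<union> Y)" "X \<union> insert x Y = insert x (X \<union> Y)"
        "insert x X \<union> insert x Y = insert x (X \<union> Y)"
      and Int: "insert x X \<inter> Y = X \<inter> Y" "X \<inter> insert x Y = X \<inter> Y"
        "insert x X \<inter> insert x Y = insert x (X \<inter> Y)"
      by auto
    have sub: "X \<subseteq> insert x S" "Y \<subseteq> insert x S" "insert x X \<subseteq> insert x S"
        "insert x Y \<subseteq> insert x S" "X \<union> Y \<subseteq> insert x S" "X \<inter> Y \<subseteq> insert x S"
        "insert x (X \<union> Y) \<subseteq> insert x S" "insert x (X \<inter> Y) \<subseteq> insert x S"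
      using XS YS by auto
    show "?lift \<alpha> X * ?lift \<beta> Y \<le> ?lift \<gamma> (X \<union> Y) * ?lift \<delta> (X \<inter> Y)"
      using insert.prems(2)[OF sub(1,2)] insert.prems(2)[OF sub(1,4)]
        insert.prems(2)[OF sub(3,2)] insert.prems(2)[OF sub(3,4)]
      by (intro four_functions_one_point) (auto simp: Un Int insert.prems(1) sub)
  qed
  then show ?case using insert.hyps by (simp add: sum_Pow_insert)
qed

corollary holley_up_set:
  fixes a b :: "'a set \<Rightarrow> real"
  assumes "finite S" and nonneg: "\<And>X. X \<subseteq> S \<Longrightarrow> a X \<ge> 0 \<and> b X \<ge> 0"
    and supermod: "\<And>X Y. X \<subseteq> S \<Longrightarrow> Y \<subseteq> S \<Longrightarrow> a X * b Y \<le> a (X \<union> Y) * b (X \<inter> Y)"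
    and "U \<subseteq> Pow S" and up: "\<And>X Y. X \<in> U \<Longrightarrow> X \<subseteq> Y \<Longrightarrow> Y \<subseteq> S \<Longrightarrow> Y \<in> U"
  shows "(\<Sum>X\<in>Pow S. a X) * (\<Sum>X\<in>U. b X) \<le> (\<Sum>X\<in>U. a X) * (\<Sum>X\<in>Pow S. b X)"
proof -
  have restrict: "(\<Sum>X\<in>U. f X) = (\<Sum>X\<in>Pow S. if X \<in> U then f X else 0)" for f :: "'a set \<Rightarrow> real"
    using assms(1,4) by (simp add: sum.inter_restrict[symmetric] Int_absorb1)
  have "(\<Sum>X\<in>Pow S. a X) * (\<Sum>X\<in>Pow S. if X \<in> U then b X else 0)
     \<le> (\<Sum>X\<in>Pow S. if X \<in> U then a X else 0) * (\<Sum>X\<in>Pow S. b X)"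
  proof (rule four_functions[OF assms(1)])
    fix X Y assume XS: "X \<subseteq> S" and YS: "Y \<subseteq> S"
    show "a X * (if Y \<in> U then b Y else 0) \<le> (if X \<union> Y \<in> U then a (X \<union> Y) else 0) * b (X \<inter> Y)"
    proof (cases "Y \<in> U")
      case True
      then have "X \<union> Y \<in> U" using up XS YS by blast
      then show ?thesis using True supermod XS YS by auto
    next
      case False
      have "a (X \<union> Y) \<ge> 0" "b (X \<inter> Y) \<ge> 0" using nonneg XS YS by (meson Un_least le_infI1)+
      then show ?thesis using False by auto
    qed
  qed (use nonneg in auto)
  then show ?thesis by (simp only: restrict[symmetric])
qed

section \<open>Spin configurations and monotone events\<close>

definition config_of :: "vtx set \<Rightarrow> vtx set \<Rightarrow> vtx \<Rightarrow> real" where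
  "config_of S X = (\<lambda>v. if v \<in> X then 1 else if v \<in> S then -1 else 0)"

lemma config_of_in_configs: "X \<subseteq> S \<Longrightarrow> config_of S X \<in> configs S"
  unfolding config_of_def configs_def by auto

lemma configs_eq_image_config_of: "configs S = config_of S ` Pow S"
proof
  show "config_of S ` Pow S \<subseteq> configs S" using config_of_in_configs by auto
  show "configs S \<subseteq> config_of S ` Pow S"
  proof
    fix \<sigma> assume "\<sigma> \<in> configs S"
    then have "\<sigma> = config_of S {v\<in>S. \<sigma> v = 1}"
      unfolding configs_def config_of_def by (auto intro!: ext)
    then show "\<sigma> \<in> config_of S ` Pow S" by blast
  qed
qed

lemma inj_on_config_of: "inj_on (config_of S) (Pow S)"
proof (rule inj_onI)
  fix X Y assume "config_of S X = config_of S Y"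
  then have "config_of S X v = config_of S Y v" for v by simp
  then show "X = Y" unfolding config_of_def by (metis one_neq_neg_one zero_neq_one equalityI subsetI)
qed

lemma finite_configs: "finite S \<Longrightarrow> finite (configs S)"
  by (simp add: configs_eq_image_config_of)

lemma config_of_Un: "config_of S (X \<union> Y) = (\<lambda>v. max (config_of S X v) (config_of S Y v))"
  unfolding config_of_def by (auto intro!: ext)

lemma config_of_Int: "config_of S (X \<inter> Y) = (\<lambda>v. min (config_of S X v) (config_of S Y v))"
  unfolding config_of_def by (auto intro!: ext)

lemma sum_configs_subset:
  assumes "U \<subseteq> configs S"
  shows "(\<Sum>\<sigma>\<in>U. f \<sigma>) = (\<Sum>X\<in>{X\<in>Pow S. config_of S X \<in> U}. f (config_of S X))"
proof -
  have "U = config_of S ` {X\<in>Pow S. config_of S X \<in> U}"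
    using assms configs_eq_image_config_of by auto
  moreover have "inj_on (config_of S) {X\<in>Pow S. config_of S X \<in> U}"
    using inj_on_config_of by (rule inj_on_subset) auto
  ultimately show ?thesis by (metis (no_types, lifting) sum.reindex_cong)
qed

lemma sum_configs: "(\<Sum>\<sigma>\<in>configs S. f \<sigma>) = (\<Sum>X\<in>Pow S. f (config_of S X))"
proof -
  have "{X\<in>Pow S. config_of S X \<in> configs S} = Pow S" using config_of_in_configs by auto
  then show ?thesis using sum_configs_subset[of "configs S" S f] by simp
qed

lemma holley_configs:
  fixes a b :: "(vtx \<Rightarrow> real) \<Rightarrow> real"
  assumes "finite S" and nonneg: "\<And>\<sigma>. \<sigma> \<in> configs S \<Longrightarrow> a \<sigma> \<ge> 0 \<and> b \<sigma> \<ge> 0"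
    and supermod: "\<And>\<sigma> \<eta>. \<sigma> \<in> configs S \<Longrightarrow> \<eta> \<in> configs S \<Longrightarrow>
      a \<sigma> * b \<eta> \<le> a (\<lambda>v. max (\<sigma> v) (\<eta> v)) * b (\<lambda>v. min (\<sigma> v) (\<eta> v))"
    and U: "U \<subseteq> configs S"
    and up: "\<And>\<sigma> \<eta>. \<sigma> \<in> U \<Longrightarrow> \<eta> \<in> configs S \<Longrightarrow> \<forall>v\<in>S. \<sigma> v \<le> \<eta> v \<Longrightarrow> \<eta> \<in> U"
  shows "(\<Sum>\<sigma>\<in>configs S. a \<sigma>) * (\<Sum>\<sigma>\<in>U. b \<sigma>) \<le> (\<Sum>\<sigma>\<in>U. a \<sigma>) * (\<Sum>\<sigma>\<in>configs S. b \<sigma>)"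
proof -
  let ?U = "{X\<in>Pow S. config_of S X \<in> U}"
  have "(\<Sum>X\<in>Pow S. a (config_of S X)) * (\<Sum>X\<in>?U. b (config_of S X))
      \<le> (\<Sum>X\<in>?U. a (config_of S X)) * (\<Sum>X\<in>Pow S. b (config_of S X))"
  proof (rule holley_up_set[OF assms(1)])
    fix X Y assume "X \<in> ?U" "X \<subseteq> Y" "Y \<subseteq> S"
    moreover have "\<forall>v\<in>S. config_of S X v \<le> config_of S Y v"
      using \<open>X \<subseteq> Y\<close> unfolding config_of_def by auto
    ultimately show "Y \<in> ?U" using up config_of_in_configs by blast
  qed (use nonneg supermod config_of_in_configs in \<open>auto simp: config_of_Un config_of_Int\<close>)
  then show ?thesis unfolding sum_configs sum_configs_subset[OF U] .
qed

lemma max_in_configs: "\<sigma> \<in> configs S \<Longrightarrow> \<eta> \<in> configs S \<Longrightarrow> (\<lambda>v. max (\<sigma> v) (\<eta> v)) \<in> configs S"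
  unfolding configs_def max_def by auto

lemma min_in_configs: "\<sigma> \<in> configs S \<Longrightarrow> \<eta> \<in> configs S \<Longrightarrow> (\<lambda>v. min (\<sigma> v) (\<eta> v)) \<in> configs S"
  unfolding configs_def min_def by auto

lemma increasing_setD:
  "increasing_set S \<Omega> \<Longrightarrow> \<sigma> \<in> \<Omega> \<Longrightarrow> \<sigma>' \<in> configs S \<Longrightarrow> \<forall>v\<in>S. \<sigma> v \<le> \<sigma>' v \<Longrightarrow> \<sigma>' \<in> \<Omega>"
  unfolding increasing_set_def by simp

lemma increasing_set_subset: "increasing_set S \<Omega> \<Longrightarrow> \<Omega> \<subseteq> configs S"
  unfolding increasing_set_def by simp

lemma decreasing_set_subset: "decreasing_set S \<Omega> \<Longrightarrow> \<Omega> \<subseteq> configs S"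
  unfolding decreasing_set_def by simp

lemma increasing_set_max:
  assumes "increasing_set S \<Omega>" and "\<sigma> \<in> \<Omega>" and "\<eta> \<in> configs S"
  shows "(\<lambda>v. max (\<sigma> v) (\<eta> v)) \<in> \<Omega>"
proof (rule increasing_setD[OF assms(1,2)])
  show "(\<lambda>v. max (\<sigma> v) (\<eta> v)) \<in> configs S"
    using assms(2,3) increasing_set_subset[OF assms(1)] by (intro max_in_configs) auto
qed simp

lemma decreasing_set_min:
  assumes "decreasing_set S \<Omega>" and "\<sigma> \<in> configs S" and "\<eta> \<in> \<Omega>"
  shows "(\<lambda>v. min (\<sigma> v) (\<eta> v)) \<in> \<Omega>"
proof (rule ccontr)
  assume notin: "(\<lambda>v. min (\<sigma> v) (\<eta> v)) \<notin> \<Omega>"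
  have \<eta>: "\<eta> \<in> configs S" using assms(3) decreasing_set_subset[OF assms(1)] by blast
  have inc: "increasing_set S (configs S - \<Omega>)" using assms(1) unfolding decreasing_set_def by simp
  have "\<eta> \<in> configs S - \<Omega>"
  proof (rule increasing_setD[OF inc, of "\<lambda>v. min (\<sigma> v) (\<eta> v)"])
    show "(\<lambda>v. min (\<sigma> v) (\<eta> v)) \<in> configs S - \<Omega>" using min_in_configs[OF assms(2) \<eta>] notin by simp
  qed (use \<eta> in simp_all)
  then show False using assms(3) by simp
qed

section \<open>The Ising Hamiltonian\<close>

lemma finite_Lam: "finite (Lam r)"
proof -
  have "Lam r \<subseteq> {-r..r} \<times> {-r..r}" unfolding Lam_def by auto
  then show ?thesis by (rule finite_subset) auto
qed

lemma Lam_mono: "r \<le> s \<Longrightarrow> Lam r \<subseteq> Lam s"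
  unfolding Lam_def by auto

lemma finite_bdry:
  assumes "finite S"
  shows "finite (bdry S)"
proof -
  have "bdry S \<subseteq> (\<Union>u\<in>S. {fst u - 1..fst u + 1} \<times> {snd u - 1..snd u + 1})"
    unfolding bdry_def adj_def by force
  then show ?thesis by (rule finite_subset) (use assms in auto)
qed

lemma card_adj_le_4: "card {u\<in>S. adj u v} \<le> 4"
proof -
  have "{u\<in>S. adj u v} \<subseteq> {(fst v + 1, snd v), (fst v - 1, snd v), (fst v, snd v + 1), (fst v, snd v - 1)}"
    unfolding adj_def by (auto simp: abs_if split: if_splits)
  then have "card {u\<in>S. adj u v} \<le> card {(fst v + 1, snd v), (fst v - 1, snd v), (fst v, snd v + 1), (fst v, snd v - 1)}"
    by (rule card_mono[rotated]) simp
  also have "\<dots> \<le> 4" by (simp add: card_insert_if)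
  finally show ?thesis .
qed

lemma rearrangement_max_min:
  fixes a b c d :: real
  shows "a * c + b * d \<le> max a b * max c d + min a b * min c d"
proof -
  have "a \<le> b \<Longrightarrow> d \<le> c \<Longrightarrow> 0 \<le> (b - a) * (c - d)" by simp
  moreover have "b \<le> a \<Longrightarrow> c \<le> d \<Longrightarrow> 0 \<le> (a - b) * (d - c)" by simp
  ultimately show ?thesis by (auto simp: max_def min_def algebra_simps)
qed

lemma Ham_max_min_le:
  assumes mono: "\<forall>v\<in>bdry S. \<tau>m v \<le> \<tau>p v"
  shows "Ham h \<Delta> \<Delta>' N S \<tau>p t (\<lambda>v. max (\<sigma> v) (\<eta> v)) + Ham h \<Delta> \<Delta>' N S \<tau>m t (\<lambda>v. min (\<sigma> v) (\<eta> v))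
      \<le> Ham h \<Delta> \<Delta>' N S \<tau>p t \<sigma> + Ham h \<Delta> \<Delta>' N S \<tau>m t \<eta>"
proof -
  let ?mx = "\<lambda>v. max (\<sigma> v) (\<eta> v)" and ?mn = "\<lambda>v. min (\<sigma> v) (\<eta> v)"
  have bonds: "(\<Sum>(u,v)\<in>P. \<sigma> u * \<sigma> v) + (\<Sum>(u,v)\<in>P. \<eta> u * \<eta> v)
      \<le> (\<Sum>(u,v)\<in>P. ?mx u * ?mx v) + (\<Sum>(u,v)\<in>P. ?mn u * ?mn v)" for P
    unfolding sum.distrib[symmetric] by (rule sum_mono) (auto simp: rearrangement_max_min)
  have bdry_bonds:
    "(\<Sum>(u,v)\<in>P. \<sigma> u * \<tau>p v) + (\<Sum>(u,v)\<in>P. \<eta> u * \<tau>m v)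
      \<le> (\<Sum>(u,v)\<in>P. ?mx u * \<tau>p v) + (\<Sum>(u,v)\<in>P. ?mn u * \<tau>m v)"
    if "P \<subseteq> UNIV \<times> bdry S" for P
    unfolding sum.distrib[symmetric]
  proof (rule sum_mono, clarify)
    fix u v assume "(u, v) \<in> P"
    then have "max (\<tau>p v) (\<tau>m v) = \<tau>p v" "min (\<tau>p v) (\<tau>m v) = \<tau>m v" using that mono by auto
    then show "\<sigma> u * \<tau>p v + \<eta> u * \<tau>m v \<le> ?mx u * \<tau>p v + ?mn u * \<tau>m v"
      using rearrangement_max_min[where a="\<sigma> u" and b="\<eta> u" and c="\<tau>p v" and d="\<tau>m v"] by simp
  qed
  have field: "(\<Sum>u\<in>S. \<sigma> u * f u) + (\<Sum>u\<in>S. \<eta> u * f u) = (\<Sum>u\<in>S. ?mx u * f u) + (\<Sum>u\<in>S. ?mn u * f u)"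
    for f :: "vtx \<Rightarrow> real"
    unfolding sum.distrib[symmetric] by (rule sum.cong) (auto simp: max_def min_def algebra_simps)
  show ?thesis
    unfolding Ham_def
    using bonds[of "{(u,v). u \<in> S \<and> v \<in> S \<and> adj u v}"]
      bdry_bonds[of "{(u,v). u \<in> S \<and> v \<in> bdry S \<and> adj u v}"] field[of "hfield h \<Delta> \<Delta>' N t"]
    by fastforce
qed

lemma Ham_bdry_diff_le:
  assumes "finite S" and "\<sigma> \<in> configs S" and mono: "\<forall>v\<in>bdry S. \<tau>m v \<le> \<tau>p v"
  shows "\<bar>Ham h \<Delta> \<Delta>' N S \<tau>p t \<sigma> - Ham h \<Delta> \<Delta>' N S \<tau>m t \<sigma>\<bar> \<le> 4 * (\<Sum>v\<in>bdry S. \<tau>p v - \<tau>m v)"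
proof -
  let ?P = "{(u,v). u \<in> S \<and> v \<in> bdry S \<and> adj u v}"
  have fin: "finite (bdry S)" using assms(1) by (rule finite_bdry)
  have "Ham h \<Delta> \<Delta>' N S \<tau>m t \<sigma> - Ham h \<Delta> \<Delta>' N S \<tau>p t \<sigma>
      = (\<Sum>(u,v)\<in>?P. \<sigma> u * \<tau>p v) - (\<Sum>(u,v)\<in>?P. \<sigma> u * \<tau>m v)"
    unfolding Ham_def by simp
  also have "\<dots> = (\<Sum>(u,v)\<in>?P. \<sigma> u * (\<tau>p v - \<tau>m v))"
    unfolding sum_subtractf[symmetric] by (rule sum.cong) (auto simp: right_diff_distrib)
  finally have "\<bar>Ham h \<Delta> \<Delta>' N S \<tau>p t \<sigma> - Ham h \<Delta> \<Delta>' N S \<tau>m t \<sigma>\<bar>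
      = \<bar>\<Sum>(u,v)\<in>?P. \<sigma> u * (\<tau>p v - \<tau>m v)\<bar>"
    by (simp add: abs_minus_commute)
  also have "\<dots> \<le> (\<Sum>(u,v)\<in>?P. \<bar>\<sigma> u * (\<tau>p v - \<tau>m v)\<bar>)"
    by (rule order_trans[OF sum_abs]) (simp add: case_prod_beta)
  also have "\<dots> = (\<Sum>(u,v)\<in>?P. \<tau>p v - \<tau>m v)"
  proof (rule sum.cong[OF refl], clarify)
    fix u v assume "u \<in> S" "v \<in> bdry S"
    then have "\<bar>\<sigma> u\<bar> = 1" "\<tau>m v \<le> \<tau>p v" using assms(2) mono unfolding configs_def by auto
    then show "\<bar>\<sigma> u * (\<tau>p v - \<tau>m v)\<bar> = \<tau>p v - \<tau>m v" by (simp add: abs_mult)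
  qed
  also have "\<dots> = (\<Sum>v\<in>bdry S. real (card {u\<in>S. adj u v}) * (\<tau>p v - \<tau>m v))"
  proof -
    have "?P = (SIGMA u:S. {v\<in>bdry S. adj u v})" by auto
    then have "(\<Sum>(u,v)\<in>?P. \<tau>p v - \<tau>m v) = (\<Sum>u\<in>S. \<Sum>v\<in>{v\<in>bdry S. adj u v}. \<tau>p v - \<tau>m v)"
      using assms(1) fin by (simp add: sum.Sigma)
    also have "\<dots> = (\<Sum>v\<in>bdry S. \<Sum>u\<in>{u\<in>S. adj u v}. \<tau>p v - \<tau>m v)"
      using assms(1) fin by (rule sum.swap_restrict)
    finally show ?thesis by simp
  qed
  also have "\<dots> \<le> (\<Sum>v\<in>bdry S. 4 * (\<tau>p v - \<tau>m v))"
    using mono card_adj_le_4 by (intro sum_mono mult_right_mono) auto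
  finally show ?thesis by (simp add: sum_distrib_left)
qed

lemma weight_pos: "weight \<beta> h \<Delta> \<Delta>' N S \<tau> t \<sigma> > 0"
  unfolding weight_def by simp

lemma weight_le_exp_mult:
  assumes "\<beta> \<ge> 0" and "\<bar>Ham h \<Delta> \<Delta>' N S \<tau> t \<sigma> - Ham h \<Delta> \<Delta>' N S \<tau>' t \<sigma>\<bar> \<le> c"
  shows "weight \<beta> h \<Delta> \<Delta>' N S \<tau> t \<sigma> \<le> exp (\<beta> * c) * weight \<beta> h \<Delta> \<Delta>' N S \<tau>' t \<sigma>"
proof -
  have "\<beta> * (Ham h \<Delta> \<Delta>' N S \<tau>' t \<sigma> - Ham h \<Delta> \<Delta>' N S \<tau> t \<sigma>) \<le> \<beta> * c"
    using assms by (intro mult_left_mono) auto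
  then show ?thesis unfolding weight_def by (simp add: algebra_simps flip: exp_add)
qed

lemma weight_max_min_ge:
  assumes "\<beta> \<ge> 0" and "\<forall>v\<in>bdry S. \<tau>m v \<le> \<tau>p v"
  shows "weight \<beta> h \<Delta> \<Delta>' N S \<tau>p t \<sigma> * weight \<beta> h \<Delta> \<Delta>' N S \<tau>m t \<eta>
      \<le> weight \<beta> h \<Delta> \<Delta>' N S \<tau>p t (\<lambda>v. max (\<sigma> v) (\<eta> v)) * weight \<beta> h \<Delta> \<Delta>' N S \<tau>m t (\<lambda>v. min (\<sigma> v) (\<eta> v))"
  using mult_left_mono[OF Ham_max_min_le[OF assms(2)] assms(1)]
  unfolding weight_def by (simp add: algebra_simps flip: exp_add)

lemma weight_tilt:
  assumes "finite S" and "Lam (N div 8) \<subseteq> S"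
  shows "weight \<beta> h \<Delta> \<Delta>' N S \<tau> t \<sigma>
    = weight \<beta> h \<Delta> \<Delta>' N S \<tau> 0 \<sigma> * exp (t * (\<beta> * \<Delta> * (\<Sum>u\<in>Lam (N div 8). \<sigma> u)))"
proof -
  have "(\<Sum>u\<in>S. \<sigma> u * hfield h \<Delta> \<Delta>' N t u)
      = (\<Sum>u\<in>S. \<sigma> u * hfield h \<Delta> \<Delta>' N 0 u + t * \<Delta> * (if u \<in> Lam (N div 8) then \<sigma> u else 0))"
    by (rule sum.cong) (auto simp: hfield_def algebra_simps)
  also have "\<dots> = (\<Sum>u\<in>S. \<sigma> u * hfield h \<Delta> \<Delta>' N 0 u) + t * \<Delta> * (\<Sum>u\<in>S \<inter> Lam (N div 8). \<sigma> u)"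
    using assms(1) by (simp add: sum.distrib sum_distrib_left[symmetric] sum.inter_restrict)
  also have "S \<inter> Lam (N div 8) = Lam (N div 8)" using assms(2) by auto
  finally have field: "(\<Sum>u\<in>S. \<sigma> u * hfield h \<Delta> \<Delta>' N t u)
      = (\<Sum>u\<in>S. \<sigma> u * hfield h \<Delta> \<Delta>' N 0 u) + t * \<Delta> * (\<Sum>u\<in>Lam (N div 8). \<sigma> u)" .
  show ?thesis unfolding weight_def Ham_def field by (simp add: algebra_simps flip: exp_add)
qed

section \<open>Partition functions restricted to events\<close>

definition part_fun :: "real \<Rightarrow> (vtx \<Rightarrow> real) \<Rightarrow> real \<Rightarrow> real \<Rightarrow> int \<Rightarrow> vtx set \<Rightarrow> (vtx \<Rightarrow> real)
     \<Rightarrow> real \<Rightarrow> (vtx \<Rightarrow> real) set \<Rightarrow> real" where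
  "part_fun \<beta> h \<Delta> \<Delta>' N S \<tau> t \<Omega> = (\<Sum>\<sigma>\<in>\<Omega> \<inter> configs S. weight \<beta> h \<Delta> \<Delta>' N S \<tau> t \<sigma>)"

lemma part_fun_pos:
  assumes "finite S" and "\<Omega> \<subseteq> configs S" and "\<Omega> \<noteq> {}"
  shows "part_fun \<beta> h \<Delta> \<Delta>' N S \<tau> t \<Omega> > 0"
  unfolding part_fun_def using assms by (intro sum_pos) (auto simp: finite_configs weight_pos)

lemma part_fun_mono:
  assumes "finite S" and "\<Omega> \<subseteq> \<Omega>'"
  shows "part_fun \<beta> h \<Delta> \<Delta>' N S \<tau> t \<Omega> \<le> part_fun \<beta> h \<Delta> \<Delta>' N S \<tau> t \<Omega>'"
  unfolding part_fun_def using assms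
  by (intro sum_mono2) (auto simp: finite_configs weight_pos less_imp_le)

lemma gibbs_eq_part_fun:
  "gibbs \<beta> h \<Delta> \<Delta>' N S \<tau> t \<Omega> = part_fun \<beta> h \<Delta> \<Delta>' N S \<tau> t \<Omega> / part_fun \<beta> h \<Delta> \<Delta>' N S \<tau> t (configs S)"
  unfolding gibbs_def part_fun_def by simp

lemma part_fun_le_exp_mult:
  assumes "\<beta> \<ge> 0"
    and "\<And>\<sigma>. \<sigma> \<in> configs S \<Longrightarrow> \<bar>Ham h \<Delta> \<Delta>' N S \<tau> t \<sigma> - Ham h \<Delta> \<Delta>' N S \<tau>' t \<sigma>\<bar> \<le> c"
  shows "part_fun \<beta> h \<Delta> \<Delta>' N S \<tau> t \<Omega> \<le> exp (\<beta> * c) * part_fun \<beta> h \<Delta> \<Delta>' N S \<tau>' t \<Omega>"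
  unfolding part_fun_def sum_distrib_left
  by (intro sum_mono weight_le_exp_mult assms) auto

lemma cond_spin_eq_part_fun:
  assumes "finite S" and "v \<in> S" and "\<Omega> \<subseteq> configs S" and "\<Omega> \<noteq> {}"
  shows "cond_spin \<beta> h \<Delta> \<Delta>' N S \<tau> t \<Omega> v
    = 2 * part_fun \<beta> h \<Delta> \<Delta>' N S \<tau> t (\<Omega> \<inter> {\<sigma>\<in>configs S. \<sigma> v = 1}) / part_fun \<beta> h \<Delta> \<Delta>' N S \<tau> t \<Omega> - 1"
proof -
  let ?W = "weight \<beta> h \<Delta> \<Delta>' N S \<tau> t" and ?A = "\<Omega> \<inter> configs S"
  have fin: "finite ?A" using assms(1) by (simp add: finite_configs)
  have "(\<Sum>\<sigma>\<in>?A. \<sigma> v * ?W \<sigma>) = (\<Sum>\<sigma>\<in>?A. 2 * (if \<sigma> \<in> {\<sigma>. \<sigma> v = 1} then ?W \<sigma> else 0) - ?W \<sigma>)"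
  proof (rule sum.cong[OF refl])
    fix \<sigma> assume "\<sigma> \<in> ?A"
    then have "\<sigma> v = 1 \<or> \<sigma> v = -1" using assms(2) unfolding configs_def by auto
    then show "\<sigma> v * ?W \<sigma> = 2 * (if \<sigma> \<in> {\<sigma>. \<sigma> v = 1} then ?W \<sigma> else 0) - ?W \<sigma>" by auto
  qed
  also have "\<dots> = 2 * (\<Sum>\<sigma>\<in>?A \<inter> {\<sigma>. \<sigma> v = 1}. ?W \<sigma>) - (\<Sum>\<sigma>\<in>?A. ?W \<sigma>)"
    unfolding sum_subtractf sum.inter_restrict[OF fin] sum_distrib_left ..
  also have "?A \<inter> {\<sigma>. \<sigma> v = 1} = (\<Omega> \<inter> {\<sigma>\<in>configs S. \<sigma> v = 1}) \<inter> configs S" by auto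
  moreover have "(\<Sum>\<sigma>\<in>?A. ?W \<sigma>) > 0"
    using part_fun_pos[OF assms(1,3,4), of \<beta> h \<Delta> \<Delta>' N \<tau> t] by (simp add: part_fun_def)
  ultimately show ?thesis unfolding cond_spin_def by (simp add: part_fun_def diff_divide_distrib)
qed

lemma part_fun_holley:
  assumes "finite S" and "\<beta> \<ge> 0" and mono: "\<forall>v\<in>bdry S. \<tau>m v \<le> \<tau>p v"
    and inc: "increasing_set S \<Omega>p" and dec: "decreasing_set S \<Omega>m"
    and U: "U \<subseteq> configs S"
    and up: "\<And>\<sigma> \<eta>. \<sigma> \<in> U \<Longrightarrow> \<eta> \<in> configs S \<Longrightarrow> \<forall>v\<in>S. \<sigma> v \<le> \<eta> v \<Longrightarrow> \<eta> \<in> U"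
  shows "part_fun \<beta> h \<Delta> \<Delta>' N S \<tau>p t \<Omega>p * part_fun \<beta> h \<Delta> \<Delta>' N S \<tau>m t (\<Omega>m \<inter> U)
    \<le> part_fun \<beta> h \<Delta> \<Delta>' N S \<tau>p t (\<Omega>p \<inter> U) * part_fun \<beta> h \<Delta> \<Delta>' N S \<tau>m t \<Omega>m"
proof -
  define a where "a \<sigma> = (if \<sigma> \<in> \<Omega>p then weight \<beta> h \<Delta> \<Delta>' N S \<tau>p t \<sigma> else 0)" for \<sigma>
  define b where "b \<sigma> = (if \<sigma> \<in> \<Omega>m then weight \<beta> h \<Delta> \<Delta>' N S \<tau>m t \<sigma> else 0)" for \<sigma>
  have nonneg: "a \<sigma> \<ge> 0" "b \<sigma> \<ge> 0" for \<sigma>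
    unfolding a_def b_def by (simp_all add: less_imp_le[OF weight_pos])
  have holley: "(\<Sum>\<sigma>\<in>configs S. a \<sigma>) * (\<Sum>\<sigma>\<in>U. b \<sigma>) \<le> (\<Sum>\<sigma>\<in>U. a \<sigma>) * (\<Sum>\<sigma>\<in>configs S. b \<sigma>)"
  proof (rule holley_configs[OF assms(1) _ _ U up])
    fix \<sigma> \<eta> assume "\<sigma> \<in> configs S" "\<eta> \<in> configs S"
    show "a \<sigma> * b \<eta> \<le> a (\<lambda>v. max (\<sigma> v) (\<eta> v)) * b (\<lambda>v. min (\<sigma> v) (\<eta> v))"
    proof (cases "\<sigma> \<in> \<Omega>p \<and> \<eta> \<in> \<Omega>m")
      case True
      then have "(\<lambda>v. max (\<sigma> v) (\<eta> v)) \<in> \<Omega>p" "(\<lambda>v. min (\<sigma> v) (\<eta> v)) \<in> \<Omega>m"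
        using increasing_set_max[OF inc] decreasing_set_min[OF dec] \<open>\<sigma> \<in> configs S\<close> \<open>\<eta> \<in> configs S\<close>
        by auto
      then show ?thesis using True weight_max_min_ge[OF assms(2) mono] by (simp add: a_def b_def)
    next
      case False
      then show ?thesis
        by (auto simp: a_def b_def intro!: mult_nonneg_nonneg less_imp_le[OF weight_pos])
    qed
  qed (use nonneg in auto)
  have sum_a: "(\<Sum>\<sigma>\<in>V. a \<sigma>) = part_fun \<beta> h \<Delta> \<Delta>' N S \<tau>p t (\<Omega>p \<inter> V)"
    and sum_b: "(\<Sum>\<sigma>\<in>V. b \<sigma>) = part_fun \<beta> h \<Delta> \<Delta>' N S \<tau>m t (\<Omega>m \<inter> V)" if "V \<subseteq> configs S" for V
  proof -
    have "finite V" using that assms(1) finite_configs finite_subset by blast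
    moreover have "\<Omega>p \<inter> V \<inter> configs S = V \<inter> \<Omega>p" "\<Omega>m \<inter> V \<inter> configs S = V \<inter> \<Omega>m" using that by auto
    ultimately show "(\<Sum>\<sigma>\<in>V. a \<sigma>) = part_fun \<beta> h \<Delta> \<Delta>' N S \<tau>p t (\<Omega>p \<inter> V)"
      and "(\<Sum>\<sigma>\<in>V. b \<sigma>) = part_fun \<beta> h \<Delta> \<Delta>' N S \<tau>m t (\<Omega>m \<inter> V)"
      unfolding part_fun_def a_def b_def by (simp_all add: sum.inter_restrict)
  qed
  have "\<Omega>p \<inter> configs S = \<Omega>p" "\<Omega>m \<inter> configs S = \<Omega>m"
    using increasing_set_subset[OF inc] decreasing_set_subset[OF dec] by auto
  then show ?thesis
    using holley unfolding sum_a[OF U] sum_b[OF U] sum_a[OF order_refl] sum_b[OF order_refl] by simp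
qed

lemma cond_spin_mono:
  assumes "finite S" and "v \<in> S" and "\<beta> \<ge> 0" and mono: "\<forall>v\<in>bdry S. \<tau>m v \<le> \<tau>p v"
    and inc: "increasing_set S \<Omega>p" and "\<Omega>p \<noteq> {}" and dec: "decreasing_set S \<Omega>m" and "\<Omega>m \<noteq> {}"
  shows "cond_spin \<beta> h \<Delta> \<Delta>' N S \<tau>m t \<Omega>m v \<le> cond_spin \<beta> h \<Delta> \<Delta>' N S \<tau>p t \<Omega>p v"
proof -
  let ?Zp = "part_fun \<beta> h \<Delta> \<Delta>' N S \<tau>p t" and ?Zm = "part_fun \<beta> h \<Delta> \<Delta>' N S \<tau>m t"
  let ?U = "{\<sigma>\<in>configs S. \<sigma> v = 1}"
  have sub: "\<Omega>p \<subseteq> configs S" "\<Omega>m \<subseteq> configs S"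
    using increasing_set_subset[OF inc] decreasing_set_subset[OF dec] .
  have up: "\<eta> \<in> ?U" if "\<sigma> \<in> ?U" "\<eta> \<in> configs S" "\<forall>v\<in>S. \<sigma> v \<le> \<eta> v" for \<sigma> \<eta>
  proof -
    have "\<eta> v = 1 \<or> \<eta> v = -1" using that(2) assms(2) unfolding configs_def by blast
    moreover have "\<sigma> v = 1" "\<sigma> v \<le> \<eta> v" using that(1,3) assms(2) by auto
    ultimately show ?thesis using that(2) by auto
  qed
  have "?Zp \<Omega>p * ?Zm (\<Omega>m \<inter> ?U) \<le> ?Zp (\<Omega>p \<inter> ?U) * ?Zm \<Omega>m"
    by (rule part_fun_holley[OF assms(1,3) mono inc dec _ up]) auto
  moreover have "?Zp \<Omega>p > 0" "?Zm \<Omega>m > 0" using part_fun_pos assms(1,6,8) sub by auto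
  ultimately have "?Zm (\<Omega>m \<inter> ?U) / ?Zm \<Omega>m \<le> ?Zp (\<Omega>p \<inter> ?U) / ?Zp \<Omega>p"
    by (simp add: field_simps mult.commute)
  then show ?thesis
    using cond_spin_eq_part_fun[OF assms(1,2) sub(1) assms(6)] cond_spin_eq_part_fun[OF assms(1,2) sub(2) assms(8)]
    by simp
qed

section \<open>Derivative of the log partition function\<close>

lemma has_real_derivative_ln_sum_exp:
  fixes c k :: "'a \<Rightarrow> real"
  assumes "finite A" and "A \<noteq> {}" and "\<And>\<sigma>. \<sigma> \<in> A \<Longrightarrow> c \<sigma> > 0"
  shows "((\<lambda>t. ln (\<Sum>\<sigma>\<in>A. c \<sigma> * exp (t * k \<sigma>))) has_real_derivative
      (\<Sum>\<sigma>\<in>A. k \<sigma> * (c \<sigma> * exp (t * k \<sigma>))) / (\<Sum>\<sigma>\<in>A. c \<sigma> * exp (t * k \<sigma>))) (at t within X)"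
proof -
  have "((\<lambda>t. \<Sum>\<sigma>\<in>A. c \<sigma> * exp (t * k \<sigma>)) has_real_derivative (\<Sum>\<sigma>\<in>A. k \<sigma> * (c \<sigma> * exp (t * k \<sigma>))))
      (at t within X)"
    by (rule DERIV_sum) (auto intro!: derivative_eq_intros)
  moreover have "(\<Sum>\<sigma>\<in>A. c \<sigma> * exp (t * k \<sigma>)) > 0" using assms by (intro sum_pos) auto
  ultimately show ?thesis using DERIV_chain2[OF DERIV_ln_divide] by (simp add: divide_simps)
qed

lemma has_integral_ln_sum_exp:
  fixes c k :: "'a \<Rightarrow> real"
  assumes "finite A" and "A \<noteq> {}" and "\<And>\<sigma>. \<sigma> \<in> A \<Longrightarrow> c \<sigma> > 0" and "a \<le> b"
  shows "((\<lambda>t. (\<Sum>\<sigma>\<in>A. k \<sigma> * (c \<sigma> * exp (t * k \<sigma>))) / (\<Sum>\<sigma>\<in>A. c \<sigma> * exp (t * k \<sigma>))) has_integral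
      ln (\<Sum>\<sigma>\<in>A. c \<sigma> * exp (b * k \<sigma>)) - ln (\<Sum>\<sigma>\<in>A. c \<sigma> * exp (a * k \<sigma>))) {a..b}"
  using assms(4)
  by (intro fundamental_theorem_of_calculus)
     (auto simp: has_real_derivative_iff_has_vector_derivative[symmetric]
       intro: has_real_derivative_ln_sum_exp[OF assms(1-3)])

lemma continuous_on_sum_exp_ratio:
  fixes c k f :: "'a \<Rightarrow> real"
  assumes "finite A" and "A \<noteq> {}" and "\<And>\<sigma>. \<sigma> \<in> A \<Longrightarrow> c \<sigma> > 0"
  shows "continuous_on X (\<lambda>t. (\<Sum>\<sigma>\<in>A. f \<sigma> * (c \<sigma> * exp (t * k \<sigma>))) / (\<Sum>\<sigma>\<in>A. c \<sigma> * exp (t * k \<sigma>)))"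
proof (intro continuous_intros ballI)
  fix t show "(\<Sum>\<sigma>\<in>A. c \<sigma> * exp (t * k \<sigma>)) \<noteq> 0"
    using assms by (metis (no_types, lifting) exp_gt_zero mult_pos_pos order_less_irrefl sum_pos)
qed

lemma cond_spin_eq_tilt:
  assumes "finite S" and "Lam (N div 8) \<subseteq> S"
  shows "cond_spin \<beta> h \<Delta> \<Delta>' N S \<tau> t \<Omega> v =
    (\<Sum>\<sigma>\<in>\<Omega> \<inter> configs S. \<sigma> v * (weight \<beta> h \<Delta> \<Delta>' N S \<tau> 0 \<sigma> * exp (t * (\<beta> * \<Delta> * (\<Sum>u\<in>Lam (N div 8). \<sigma> u))))) /
    (\<Sum>\<sigma>\<in>\<Omega> \<inter> configs S. weight \<beta> h \<Delta> \<Delta>' N S \<tau> 0 \<sigma> * exp (t * (\<beta> * \<Delta> * (\<Sum>u\<in>Lam (N div 8). \<sigma> u))))"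
  unfolding cond_spin_def weight_tilt[OF assms, where t = t] by (rule refl)

lemma has_integral_sum_cond_spin:
  assumes "finite S" and "Lam (N div 8) \<subseteq> S" and "\<Omega> \<subseteq> configs S" and "\<Omega> \<noteq> {}"
  shows "((\<lambda>t. \<beta> * \<Delta> * (\<Sum>v\<in>Lam (N div 8). cond_spin \<beta> h \<Delta> \<Delta>' N S \<tau> t \<Omega> v)) has_integral
      ln (part_fun \<beta> h \<Delta> \<Delta>' N S \<tau> 1 \<Omega>) - ln (part_fun \<beta> h \<Delta> \<Delta>' N S \<tau> 0 \<Omega>)) {0..1}"
proof -
  let ?A = "\<Omega> \<inter> configs S" and ?c = "weight \<beta> h \<Delta> \<Delta>' N S \<tau> 0"
  let ?k = "\<lambda>\<sigma>. \<beta> * \<Delta> * (\<Sum>u\<in>Lam (N div 8). \<sigma> u)"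
  have A: "finite ?A" "?A \<noteq> {}" using assms by (auto simp: finite_configs)
  have mean: "(\<Sum>\<sigma>\<in>?A. ?k \<sigma> * (?c \<sigma> * exp (t * ?k \<sigma>))) / (\<Sum>\<sigma>\<in>?A. ?c \<sigma> * exp (t * ?k \<sigma>))
      = \<beta> * \<Delta> * (\<Sum>v\<in>Lam (N div 8). cond_spin \<beta> h \<Delta> \<Delta>' N S \<tau> t \<Omega> v)" for t
  proof -
    have "(\<Sum>\<sigma>\<in>?A. ?k \<sigma> * w \<sigma>) = \<beta> * \<Delta> * (\<Sum>v\<in>Lam (N div 8). \<Sum>\<sigma>\<in>?A. \<sigma> v * w \<sigma>)" for w
      by (simp add: sum_distrib_left sum_distrib_right mult.assoc sum.swap[of _ ?A])
    then show ?thesis by (simp add: cond_spin_eq_tilt[OF assms(1,2)] sum_divide_distrib[symmetric])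
  qed
  have part_fun: "part_fun \<beta> h \<Delta> \<Delta>' N S \<tau> s \<Omega> = (\<Sum>\<sigma>\<in>?A. ?c \<sigma> * exp (s * ?k \<sigma>))" for s
    unfolding part_fun_def weight_tilt[OF assms(1,2), where t = s] by (rule refl)
  have "((\<lambda>t. (\<Sum>\<sigma>\<in>?A. ?k \<sigma> * (?c \<sigma> * exp (t * ?k \<sigma>))) / (\<Sum>\<sigma>\<in>?A. ?c \<sigma> * exp (t * ?k \<sigma>)))
      has_integral ln (\<Sum>\<sigma>\<in>?A. ?c \<sigma> * exp (1 * ?k \<sigma>)) - ln (\<Sum>\<sigma>\<in>?A. ?c \<sigma> * exp (0 * ?k \<sigma>))) {0..1}"
    by (rule has_integral_ln_sum_exp[OF A weight_pos]) simp
  then show ?thesis unfolding mean part_fun .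
qed

lemma continuous_on_magn:
  assumes "finite S" and "Lam (N div 8) \<subseteq> S" and "\<Omega> \<subseteq> configs S" and "\<Omega> \<noteq> {}"
  shows "continuous_on X (\<lambda>t. magn \<beta> h \<Delta> \<Delta>' N S \<tau> t \<Omega>)"
  unfolding magn_def cond_spin_eq_tilt[OF assms(1,2)] using assms
  by (intro continuous_on_sum continuous_on_sum_exp_ratio) (auto simp: finite_configs weight_pos)

section \<open>Free energy bounds\<close>

lemma ln_part_fun_le:
  assumes "finite S" and "\<beta> \<ge> 0" and "\<Omega> \<subseteq> configs S" and "\<Omega> \<noteq> {}"
    and "\<And>\<sigma>. \<sigma> \<in> configs S \<Longrightarrow> \<bar>Ham h \<Delta> \<Delta>' N S \<tau> t \<sigma> - Ham h \<Delta> \<Delta>' N S \<tau>' t \<sigma>\<bar> \<le> c"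
  shows "ln (part_fun \<beta> h \<Delta> \<Delta>' N S \<tau> t \<Omega>) \<le> \<beta> * c + ln (part_fun \<beta> h \<Delta> \<Delta>' N S \<tau>' t \<Omega>)"
proof -
  have "part_fun \<beta> h \<Delta> \<Delta>' N S \<tau> t \<Omega> \<le> exp (\<beta> * c) * part_fun \<beta> h \<Delta> \<Delta>' N S \<tau>' t \<Omega>"
    using assms(2,5) by (rule part_fun_le_exp_mult)
  moreover have pos: "part_fun \<beta> h \<Delta> \<Delta>' N S \<tau> t \<Omega> > 0" "part_fun \<beta> h \<Delta> \<Delta>' N S \<tau>' t \<Omega> > 0"
    using part_fun_pos[OF assms(1,3,4)] by auto
  ultimately have "ln (part_fun \<beta> h \<Delta> \<Delta>' N S \<tau> t \<Omega>) \<le> ln (exp (\<beta> * c) * part_fun \<beta> h \<Delta> \<Delta>' N S \<tau>' t \<Omega>)"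
    by simp
  then show ?thesis using pos by (simp add: ln_mult)
qed

lemma ln_part_fun_increments_le:
  assumes "finite S" and "\<beta> \<ge> 0" and mono: "\<forall>v\<in>bdry S. \<tau>m v \<le> \<tau>p v"
    and "\<Omega>p \<subseteq> configs S" and "\<Omega>p \<noteq> {}" and "\<Omega>m \<subseteq> configs S" and "\<Omega>m \<noteq> {}"
  shows "ln (part_fun \<beta> h \<Delta> \<Delta>' N S \<tau>p 1 \<Omega>p) - ln (part_fun \<beta> h \<Delta> \<Delta>' N S \<tau>p 0 \<Omega>p)
      - (ln (part_fun \<beta> h \<Delta> \<Delta>' N S \<tau>m 1 \<Omega>m) - ln (part_fun \<beta> h \<Delta> \<Delta>' N S \<tau>m 0 \<Omega>m))
    \<le> 8 * \<beta> * (\<Sum>v\<in>bdry S. \<tau>p v - \<tau>m v)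
      - (ln (gibbs \<beta> h \<Delta> \<Delta>' N S \<tau>p 0 \<Omega>p) + ln (gibbs \<beta> h \<Delta> \<Delta>' N S \<tau>m 1 \<Omega>m))"
proof -
  let ?Z = "part_fun \<beta> h \<Delta> \<Delta>' N S" and ?D = "\<Sum>v\<in>bdry S. \<tau>p v - \<tau>m v"
  have configs: "configs S \<subseteq> configs S" "configs S \<noteq> {}"
    using config_of_in_configs[of "{}" S] by auto
  have bdry_pm: "\<bar>Ham h \<Delta> \<Delta>' N S \<tau>p t \<sigma> - Ham h \<Delta> \<Delta>' N S \<tau>m t \<sigma>\<bar> \<le> 4 * ?D"
    and bdry_mp: "\<bar>Ham h \<Delta> \<Delta>' N S \<tau>m t \<sigma> - Ham h \<Delta> \<Delta>' N S \<tau>p t \<sigma>\<bar> \<le> 4 * ?D"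
    if "\<sigma> \<in> configs S" for \<sigma> t
    using Ham_bdry_diff_le[OF assms(1) that mono] by (simp_all add: abs_minus_commute)
  have restrict: "ln (?Z \<tau> t \<Omega>) \<le> ln (?Z \<tau> t (configs S))" if "\<Omega> \<subseteq> configs S" "\<Omega> \<noteq> {}" for \<tau> t \<Omega>
    using part_fun_pos[OF assms(1) that] part_fun_pos[OF assms(1) configs] part_fun_mono[OF assms(1) that(1)]
    by simp
  have ln_gibbs: "ln (gibbs \<beta> h \<Delta> \<Delta>' N S \<tau> t \<Omega>) = ln (?Z \<tau> t \<Omega>) - ln (?Z \<tau> t (configs S))"
    if "\<Omega> \<subseteq> configs S" "\<Omega> \<noteq> {}" for \<tau> t \<Omega>
    using part_fun_pos[OF assms(1) that, of \<beta> h \<Delta> \<Delta>' N \<tau> t]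
      part_fun_pos[OF assms(1) configs, of \<beta> h \<Delta> \<Delta>' N \<tau> t]
    by (simp add: gibbs_eq_part_fun ln_div)
  have "ln (?Z \<tau>p 1 (configs S)) \<le> \<beta> * (4 * ?D) + ln (?Z \<tau>m 1 (configs S))"
    by (rule ln_part_fun_le[OF assms(1,2) configs]) (rule bdry_pm)
  moreover have "ln (?Z \<tau>m 0 (configs S)) \<le> \<beta> * (4 * ?D) + ln (?Z \<tau>p 0 (configs S))"
    by (rule ln_part_fun_le[OF assms(1,2) configs]) (rule bdry_mp)
  ultimately show ?thesis
    using restrict[OF assms(4,5), of \<tau>p 1] restrict[OF assms(6,7), of \<tau>m 0]
      ln_gibbs[OF assms(4,5), of \<tau>p 0] ln_gibbs[OF assms(6,7), of \<tau>m 1]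
    by linarith
qed

lemma integral_magn_diff_le:
  assumes "finite S" and "N \<ge> 0" and L8: "Lam (N div 8) \<subseteq> S" and "\<beta> > 0" and "\<Delta> > 0"
    and mono: "\<forall>v\<in>bdry S. \<tau>m v \<le> \<tau>p v"
    and inc: "increasing_set S \<Omega>p" and "\<Omega>p \<noteq> {}" and dec: "decreasing_set S \<Omega>m" and "\<Omega>m \<noteq> {}"
  shows "\<Delta> * integral {0..1} (\<lambda>t. magn \<beta> h \<Delta> \<Delta>' N S \<tau>p t \<Omega>p - magn \<beta> h \<Delta> \<Delta>' N S \<tau>m t \<Omega>m)
    \<le> (ln (part_fun \<beta> h \<Delta> \<Delta>' N S \<tau>p 1 \<Omega>p) - ln (part_fun \<beta> h \<Delta> \<Delta>' N S \<tau>p 0 \<Omega>p)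
      - (ln (part_fun \<beta> h \<Delta> \<Delta>' N S \<tau>m 1 \<Omega>m) - ln (part_fun \<beta> h \<Delta> \<Delta>' N S \<tau>m 0 \<Omega>m))) / \<beta>"
proof -
  let ?cs = "\<lambda>\<tau> t \<Omega> v. cond_spin \<beta> h \<Delta> \<Delta>' N S \<tau> t \<Omega> v"
  let ?f = "\<lambda>t. magn \<beta> h \<Delta> \<Delta>' N S \<tau>p t \<Omega>p - magn \<beta> h \<Delta> \<Delta>' N S \<tau>m t \<Omega>m"
  have sub: "\<Omega>p \<subseteq> configs S" "\<Omega>m \<subseteq> configs S"
    using increasing_set_subset[OF inc] decreasing_set_subset[OF dec] .
  have "?f integrable_on {0..1}"
    using assms sub by (intro integrable_continuous_interval continuous_on_diff continuous_on_magn)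
  then have "((\<lambda>t. \<beta> * \<Delta> * ?f t) has_integral \<beta> * \<Delta> * integral {0..1} ?f) {0..1}"
    by (intro has_integral_mult_right integrable_integral)
  moreover have "((\<lambda>t. \<beta> * \<Delta> * (\<Sum>v\<in>Lam (N div 8). ?cs \<tau>p t \<Omega>p v) - \<beta> * \<Delta> * (\<Sum>v\<in>Lam (N div 8). ?cs \<tau>m t \<Omega>m v))
      has_integral ln (part_fun \<beta> h \<Delta> \<Delta>' N S \<tau>p 1 \<Omega>p) - ln (part_fun \<beta> h \<Delta> \<Delta>' N S \<tau>p 0 \<Omega>p)
      - (ln (part_fun \<beta> h \<Delta> \<Delta>' N S \<tau>m 1 \<Omega>m) - ln (part_fun \<beta> h \<Delta> \<Delta>' N S \<tau>m 0 \<Omega>m))) {0..1}"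
    using assms sub by (intro has_integral_diff has_integral_sum_cond_spin)
  moreover have "\<beta> * \<Delta> * ?f t
      \<le> \<beta> * \<Delta> * (\<Sum>v\<in>Lam (N div 8). ?cs \<tau>p t \<Omega>p v) - \<beta> * \<Delta> * (\<Sum>v\<in>Lam (N div 8). ?cs \<tau>m t \<Omega>m v)" for t
  proof -
    have L32: "Lam (N div 32) \<subseteq> Lam (N div 8)" using assms(2) by (intro Lam_mono zdiv_mono2) auto
    have "?f t = (\<Sum>v\<in>Lam (N div 32). ?cs \<tau>p t \<Omega>p v - ?cs \<tau>m t \<Omega>m v)"
      unfolding magn_def by (simp add: sum_subtractf)
    also have "\<dots> \<le> (\<Sum>v\<in>Lam (N div 8). ?cs \<tau>p t \<Omega>p v - ?cs \<tau>m t \<Omega>m v)"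
      using L8 cond_spin_mono[OF assms(1) _ _ mono inc assms(8) dec assms(10)] assms(4)
      by (intro sum_mono2[OF finite_Lam L32]) auto
    finally show ?thesis using assms(4,5) by (simp add: sum_subtractf right_diff_distrib[symmetric])
  qed
  ultimately have "\<beta> * \<Delta> * integral {0..1} ?f
    \<le> ln (part_fun \<beta> h \<Delta> \<Delta>' N S \<tau>p 1 \<Omega>p) - ln (part_fun \<beta> h \<Delta> \<Delta>' N S \<tau>p 0 \<Omega>p)
      - (ln (part_fun \<beta> h \<Delta> \<Delta>' N S \<tau>m 1 \<Omega>m) - ln (part_fun \<beta> h \<Delta> \<Delta>' N S \<tau>m 0 \<Omega>m))"
    by (rule has_integral_le)
  then show ?thesis using assms(4) by (simp add: le_divide_eq mult.commute mult.left_commute)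
qed

theorem lemma3p4:
  fixes h :: "vtx \<Rightarrow> real" and \<beta> \<Delta> \<Delta>' :: real and n :: nat and N :: int
    and S :: "vtx set" and \<tau>p \<tau>m :: "vtx \<Rightarrow> real"
    and \<Omega>p \<Omega>m :: "(vtx \<Rightarrow> real) set"
  assumes "\<beta> > 0" and "N = 2 ^ n" and "n \<ge> 10" and "\<Delta> > 0" and "\<Delta>' \<ge> 0"
    and "S \<subseteq> Lam N" and "Lam (N div 8) \<subseteq> S"
    and "\<tau>p \<in> configs (bdry S)" and "\<tau>m \<in> configs (bdry S)"
    and "\<forall>v\<in>bdry S. \<tau>m v \<le> \<tau>p v"
    and "\<Omega>p \<noteq> {}" and "increasing_set S \<Omega>p"
    and "\<Omega>m \<noteq> {}" and "decreasing_set S \<Omega>m"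
  shows "\<Delta> * integral {0..1} (\<lambda>t. magn \<beta> h \<Delta> \<Delta>' N S \<tau>p t \<Omega>p - magn \<beta> h \<Delta> \<Delta>' N S \<tau>m t \<Omega>m)
     \<le> 8 * (\<Sum>v\<in>bdry S. \<tau>p v - \<tau>m v)
        - (1/\<beta>) * (ln (gibbs \<beta> h \<Delta> \<Delta>' N S \<tau>p 0 \<Omega>p) + ln (gibbs \<beta> h \<Delta> \<Delta>' N S \<tau>m 1 \<Omega>m))"
proof -
  have "finite S" using assms(6) finite_Lam finite_subset by blast
  have sub: "\<Omega>p \<subseteq> configs S" "\<Omega>m \<subseteq> configs S"
    using increasing_set_subset[OF assms(12)] decreasing_set_subset[OF assms(14)] .
  have "\<Delta> * integral {0..1} (\<lambda>t. magn \<beta> h \<Delta> \<Delta>' N S \<tau>p t \<Omega>p - magn \<beta> h \<Delta> \<Delta>' N S \<tau>m t \<Omega>m)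
    \<le> (ln (part_fun \<beta> h \<Delta> \<Delta>' N S \<tau>p 1 \<Omega>p) - ln (part_fun \<beta> h \<Delta> \<Delta>' N S \<tau>p 0 \<Omega>p)
      - (ln (part_fun \<beta> h \<Delta> \<Delta>' N S \<tau>m 1 \<Omega>m) - ln (part_fun \<beta> h \<Delta> \<Delta>' N S \<tau>m 0 \<Omega>m))) / \<beta>"
    using \<open>finite S\<close> assms by (intro integral_magn_diff_le) simp_all
  also have "\<dots> \<le> (8 * \<beta> * (\<Sum>v\<in>bdry S. \<tau>p v - \<tau>m v)
      - (ln (gibbs \<beta> h \<Delta> \<Delta>' N S \<tau>p 0 \<Omega>p) + ln (gibbs \<beta> h \<Delta> \<Delta>' N S \<tau>m 1 \<Omega>m))) / \<beta>"
    using \<open>finite S\<close> assms sub by (intro divide_right_mono ln_part_fun_increments_le) simp_all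
  also have "\<dots> = 8 * (\<Sum>v\<in>bdry S. \<tau>p v - \<tau>m v)
      - (1/\<beta>) * (ln (gibbs \<beta> h \<Delta> \<Delta>' N S \<tau>p 0 \<Omega>p) + ln (gibbs \<beta> h \<Delta> \<Delta>' N S \<tau>m 1 \<Omega>m))"
    using assms(1) by (simp add: diff_divide_distrib)
  finally show ?thesis .
qed

end
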